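(* Every graph $H\in\mathcal{H}'$ is 4-critical, i.e. $H$ is not properly 3-colorable but every proper subgraph of $H$ is.
   Context: A near-bipartite coloring of a graph is a partition of its vertices into $I,F$ with $I$ independent and $G[F]$ a forest; a graph is nb-critical if it has none but every proper subgraph has one. Base graphs: $K_4$; the wheel $W_5$ (a 5-cycle plus a vertex adjacent to all five cycle vertices); $J_7$, with vertices $w_1,\dots,w_4,v_1,v_2,v_3$ and edges $w_1v_1,w_1v_3,w_1w_4,w_2v_1,w_2v_2,w_2w_4,w_3v_2,w_3v_3,w_3w_4,v_1v_2,v_1v_3,v_2v_3$; and $J_{12}$, with vertices $a,b,p_1,\dots,p_4,q_1,\dots,q_6$ and edges $ab,p_1p_2,p_3p_4,ap_1,ap_2,bp_3,bp_4,q_1p_1,q_1p_2,q_2p_1,q_2p_2,q_3p_3,q_3p_4,q_4p_3,q_4p_4,q_5q_1,q_5q_3,q_6q_2,q_6q_4,q_5q_6$. The family $\mathcal{H}'$ of simple graphs is defined recursively: vertices $s,t$ of a graph $J$ are specially-linked in $J$ if there exist $H\in\mathcal{H}'$ and $vw\in E(H)$ such that $J$ contains a subgraph isomorphic to $H-vw$ with $v\mapsto s$, $w\mapsto t$. A graph $H$ lies in $\mathcal{H}'$ if it is a base graph, or if $H$ is nb-critical and has an induced cycle $C=x_1\cdots x_k$, $k\in\{3,5\}$, all $x_i$ of degree 3 in $H$, such that, writing $N(x_j)=\{x_{j-1},x_{j+1},z_j\}$ (indices mod $k$), whenever $z_j\ne z_{j+1}$ the vertices $z_j,z_{j+1}$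 are specially-linked in $H-V(C)$. *)

theory Defs
  imports Main
begin

type_synonym 'a ugraph = "'a set \<times> 'a set set"

definition verts :: "'a ugraph \<Rightarrow> 'a set" where "verts G = fst G"
definition edges :: "'a ugraph \<Rightarrow> 'a set set" where "edges G = snd G"

definition wf_graph :: "'a ugraph \<Rightarrow> bool" where
  "wf_graph G \<longleftrightarrow> finite (verts G) \<and> (\<forall>e\<in>edges G. e \<subseteq> verts G \<and> card e = 2)"

definition subgraph :: "'a ugraph \<Rightarrow> 'a ugraph \<Rightarrow> bool" where
  "subgraph G' G \<longleftrightarrow> wf_graph G' \<and> verts G' \<subseteq> verts G \<and> edges G' \<subseteq> edges G"

definition proper_subgraph :: "'a ugraph \<Rightarrow> 'a ugraph \<Rightarrow> bool" where
  "proper_subgraph G' G \<longleftrightarrow> subgraph G' G \<and> G' \<noteq> G"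

definition induced :: "'a ugraph \<Rightarrow> 'a set \<Rightarrow> 'a ugraph" where
  "induced G S = (S, {e\<in>edges G. e \<subseteq> S})"

definition delete_verts :: "'a ugraph \<Rightarrow> 'a set \<Rightarrow> 'a ugraph" where
  "delete_verts G S = (verts G - S, {e\<in>edges G. e \<inter> S = {}})"

definition degree :: "'a ugraph \<Rightarrow> 'a \<Rightarrow> nat" where
  "degree G x = card {u. {x, u} \<in> edges G}"

definition is_cycle :: "'a ugraph \<Rightarrow> 'a list \<Rightarrow> bool" where
  "is_cycle G xs \<longleftrightarrow> length xs \<ge> 3 \<and> distinct xs \<and> set xs \<subseteq> verts G \<and>
     (\<forall>i<length xs. {xs ! i, xs ! ((i + 1) mod length xs)} \<in> edges G)"

definition induced_cycle :: "'a ugraph \<Rightarrow> 'a list \<Rightarrow> bool" where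
  "induced_cycle G xs \<longleftrightarrow> is_cycle G xs \<and>
     (\<forall>e\<in>edges G. e \<subseteq> set xs \<longrightarrow>
        (\<exists>i<length xs. e = {xs ! i, xs ! ((i + 1) mod length xs)}))"

definition forest :: "'a ugraph \<Rightarrow> bool" where
  "forest G \<longleftrightarrow> \<not> (\<exists>xs. is_cycle G xs)"

definition independent :: "'a ugraph \<Rightarrow> 'a set \<Rightarrow> bool" where
  "independent G I \<longleftrightarrow> (\<forall>e\<in>edges G. \<not> e \<subseteq> I)"

definition near_bipartite :: "'a ugraph \<Rightarrow> bool" where
  "near_bipartite G \<longleftrightarrow> (\<exists>I F. I \<union> F = verts G \<and> I \<inter> F = {} \<and>
      independent G I \<and> forest (induced G F))"

definition nb_critical :: "'a ugraph \<Rightarrow> bool" where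
  "nb_critical G \<longleftrightarrow> wf_graph G \<and> \<not> near_bipartite G \<and>
      (\<forall>G'. proper_subgraph G' G \<longrightarrow> near_bipartite G')"

definition colorable3 :: "'a ugraph \<Rightarrow> bool" where
  "colorable3 G \<longleftrightarrow> (\<exists>c :: 'a \<Rightarrow> nat. (\<forall>v\<in>verts G. c v < 3) \<and>
      (\<forall>u v. {u, v} \<in> edges G \<longrightarrow> c u \<noteq> c v))"

definition four_critical :: "'a ugraph \<Rightarrow> bool" where
  "four_critical G \<longleftrightarrow> \<not> colorable3 G \<and>
      (\<forall>G'. proper_subgraph G' G \<longrightarrow> colorable3 G')"

definition isomorphic :: "'a ugraph \<Rightarrow> 'b ugraph \<Rightarrow> bool" where
  "isomorphic G H \<longleftrightarrow> (\<exists>f. bij_betw f (verts G) (verts H) \<and>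
      edges H = (\<lambda>e. f ` e) ` edges G)"

definition mk_graph :: "nat \<Rightarrow> (nat \<times> nat) list \<Rightarrow> nat ugraph" where
  "mk_graph n es = ({0..<n}, set (map (\<lambda>(a, b). {a, b}) es))"

definition K4 :: "nat ugraph" where
  "K4 = mk_graph 4 [(0,1),(0,2),(0,3),(1,2),(1,3),(2,3)]"

text \<open>W5: cycle 0-1-2-3-4, hub 5.\<close>
definition W5 :: "nat ugraph" where
  "W5 = mk_graph 6 [(0,1),(1,2),(2,3),(3,4),(4,0),(5,0),(5,1),(5,2),(5,3),(5,4)]"

text \<open>J7: w1..w4 = 0..3, v1,v2,v3 = 4,5,6.\<close>
definition J7 :: "nat ugraph" where
  "J7 = mk_graph 7 [(0,4),(0,6),(0,3),(1,4),(1,5),(1,3),(2,5),(2,6),(2,3),(4,5),(4,6),(5,6)]"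

text \<open>J12: a=0, b=1, p1..p4 = 2..5, q1..q6 = 6..11.\<close>
definition J12 :: "nat ugraph" where
  "J12 = mk_graph 12 [(0,1),(2,3),(4,5),(0,2),(0,3),(1,4),(1,5),
     (6,2),(6,3),(7,2),(7,3),(8,4),(8,5),(9,4),(9,5),(10,6),(10,8),(11,7),(11,9),(10,11)]"

definition base_graph :: "'a ugraph \<Rightarrow> bool" where
  "base_graph H \<longleftrightarrow> isomorphic K4 H \<or> isomorphic W5 H \<or> isomorphic J7 H \<or> isomorphic J12 H"

text \<open>The family H' (represented by graphs with vertices in nat; it is closed under
  isomorphism). Specially-linked is inlined: s,t are specially linked in J if some
  H in H' and edge vw of H admit an injective homomorphism of H - vw into J with
  v to s and w to t.\<close>
inductive_set Hprime :: "nat ugraph set" where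
  base: "wf_graph H \<Longrightarrow> base_graph H \<Longrightarrow> H \<in> Hprime"
| step: "\<lbrakk> nb_critical H; induced_cycle H xs; length xs \<in> {3, 5};
           \<forall>x\<in>set xs. degree H x = 3;
           \<forall>j<length xs. \<forall>a b.
              {xs ! j, a} \<in> edges H \<and> a \<notin> set xs \<and>
              {xs ! ((j + 1) mod length xs), b} \<in> edges H \<and> b \<notin> set xs \<and> a \<noteq> b \<longrightarrow>
              (\<exists>H' v w f. H' \<in> Hprime \<and> {v, w} \<in> edges H' \<and>
                  inj_on f (verts H') \<and> f ` verts H' \<subseteq> verts (delete_verts H (set xs)) \<and>
                  (\<forall>e\<in>edges H' - {{v, w}}. f ` e \<in> edges (delete_verts H (set xs))) \<and>
                  f v = a \<and> f w = b) \<rbrakk>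
        \<Longrightarrow> H \<in> Hprime"

end

theory Submission
  imports Defs
begin

text \<open>Proper subgraphs of an nb-critical graph are near-bipartite, and a near-bipartite graph is
  3-colorable: one color on the independent set, two on the forest. Non-3-colorability follows by
  induction on the definition of H'. For the base graphs it is a short forced-color argument; each
  single-edge deletion is 3-colored explicitly, which suffices as they have no isolated vertices.
  In the inductive step, let c 3-color H. Distinct outer neighbors z(j), z(j+1) of consecutive
  cycle vertices are specially-linked, so c gives them one color: otherwise c would 3-color the
  non-3-colorable graph witnessing the link. Hence all z(j) share a color, and the odd cycle C
  would be properly colored with the remaining two colors.\<close>

section \<open>Forests are 2-colorable\<close>

definition is_path :: "'a set set \<Rightarrow> 'a list \<Rightarrow> bool" where
  "is_path E xs \<longleftrightarrow> distinct xs \<and> (\<forall>i. Suc i < length xs \<longrightarrow> {xs ! i, xs ! Suc i} \<in> E)"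

lemma wf_graph_edgeD:
  assumes "wf_graph G" "{u, v} \<in> edges G"
  shows "u \<noteq> v" "u \<in> verts G" "v \<in> verts G"
  using assms unfolding wf_graph_def by (auto simp: card_insert_if split: if_splits)

lemma is_path_Cons:
  "is_path E (w # xs) \<longleftrightarrow> w \<notin> set xs \<and> is_path E xs \<and> (xs \<noteq> [] \<longrightarrow> {w, hd xs} \<in> E)"
  unfolding is_path_def by (cases xs) (auto simp: nth_Cons split: nat.splits)

lemma is_cycle_mono:
  assumes "is_cycle G' xs" "verts G' \<subseteq> verts G" "edges G' \<subseteq> edges G"
  shows "is_cycle G xs"
  using assms unfolding is_cycle_def by blast

lemma is_cycle_take_path:
  assumes "is_path (edges G) xs" "set xs \<subseteq> verts G"
    and "2 \<le> i" "i < length xs" "{xs ! 0, xs ! i} \<in> edges G"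
  shows "is_cycle G (take (Suc i) xs)"
  unfolding is_cycle_def
proof (intro conjI allI impI)
  let ?ys = "take (Suc i) xs"
  have len: "length ?ys = Suc i" using assms(4) by simp
  show "3 \<le> length ?ys" "distinct ?ys" "set ?ys \<subseteq> verts G"
    using assms(1-3) len set_take_subset[of "Suc i" xs] unfolding is_path_def by auto
  fix j assume j: "j < length ?ys"
  show "{?ys ! j, ?ys ! ((j + 1) mod length ?ys)} \<in> edges G"
  proof (cases "j = i")
    case True
    then show ?thesis using assms(5) len by (simp add: insert_commute)
  next
    case False
    then show ?thesis using assms(1,4) j len unfolding is_path_def by simp
  qed
qed

text \<open>The head of a longest path has all its neighbors on the path; a second neighbor besides
  its successor would close a cycle.\<close>
lemma forest_has_leaf:
  assumes wf: "wf_graph G" and "forest G" and "verts G \<noteq> {}"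
  shows "\<exists>v\<in>verts G. degree G v \<le> 1"
proof (rule ccontr)
  assume "\<not> ?thesis"
  then have deg: "2 \<le> degree G v" if "v \<in> verts G" for v using that by force
  have fin: "finite (verts G)" using wf unfolding wf_graph_def by blast
  define P where "P = {xs. is_path (edges G) xs \<and> set xs \<subseteq> verts G \<and> xs \<noteq> []}"
  have "P \<subseteq> {xs. set xs \<subseteq> verts G \<and> length xs \<le> card (verts G)}"
    unfolding P_def is_path_def using fin by (auto simp: distinct_card[symmetric] intro: card_mono)
  then have bounded: "\<forall>ys. ys \<in> P \<longrightarrow> length ys < Suc (card (verts G))" by auto
  obtain v0 where "v0 \<in> verts G" using assms(3) by auto
  then have v0: "[v0] \<in> P" unfolding P_def is_path_def by auto
  obtain xs where xs: "xs \<in> P" and longest: "\<And>ys. ys \<in> P \<Longrightarrow> length ys \<le> length xs"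
    using ex_has_greatest_nat[of "\<lambda>xs. xs \<in> P" "[v0]" length "Suc (card (verts G))"] v0 bounded by blast
  then obtain h rest where h: "xs = h # rest" unfolding P_def by (cases xs) auto
  have path: "is_path (edges G) xs" and xs_verts: "set xs \<subseteq> verts G" using xs unfolding P_def by auto
  define N where "N = {u. {h, u} \<in> edges G}"
  have "2 \<le> card N" using deg[of h] xs_verts h unfolding N_def degree_def by auto
  then have "\<not> N \<subseteq> {xs ! 1}" using card_mono[of "{xs ! 1}" N] by auto
  then obtain w where w: "w \<in> N" "w \<noteq> xs ! 1" by blast
  have "w \<in> set xs"
  proof (rule ccontr)
    assume "w \<notin> set xs"
    then have "w # xs \<in> P"
      using path xs_verts w(1) wf_graph_edgeD[OF wf, of h w] h
      unfolding P_def N_def by (simp add: is_path_Cons insert_commute)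
    then show False using longest by fastforce
  qed
  then obtain i where i: "i < length xs" "xs ! i = w" by (auto simp: in_set_conv_nth)
  have "w \<noteq> h" using w(1) wf_graph_edgeD[OF wf, of h w] unfolding N_def by auto
  then have "i \<noteq> 0" using i h by (metis nth_Cons_0)
  with w(2) i have "2 \<le> i" by (cases i; cases "i - 1") auto
  then have "is_cycle G (take (Suc i) xs)"
    using is_cycle_take_path[OF path xs_verts] i w(1) h unfolding N_def by simp
  then show False using assms(2) unfolding forest_def by blast
qed

lemma wf_graph_delete_verts: "wf_graph G \<Longrightarrow> wf_graph (delete_verts G S)"
  unfolding wf_graph_def delete_verts_def verts_def edges_def by auto

lemma wf_graph_induced: "wf_graph G \<Longrightarrow> S \<subseteq> verts G \<Longrightarrow> wf_graph (induced G S)"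
  unfolding wf_graph_def induced_def verts_def edges_def by (auto intro: finite_subset)

lemma forest_mono:
  assumes "forest G" "verts G' \<subseteq> verts G" "edges G' \<subseteq> edges G"
  shows "forest G'"
  using assms is_cycle_mono unfolding forest_def by blast

lemma two_coloring_extend_leaf:
  fixes c' :: "'a \<Rightarrow> bool"
  assumes wf: "wf_graph G" and v: "degree G v \<le> 1"
    and c': "\<forall>x y. {x, y} \<in> edges (delete_verts G {v}) \<longrightarrow> c' x \<noteq> c' y"
  shows "\<exists>c :: 'a \<Rightarrow> bool. \<forall>x y. {x, y} \<in> edges G \<longrightarrow> c x \<noteq> c y"
proof -
  define N where "N = {u. {v, u} \<in> edges G}"
  have "N \<subseteq> verts G" using wf_graph_edgeD(3)[OF wf] unfolding N_def by blast
  then have "finite N" using wf unfolding wf_graph_def by (blast intro: finite_subset)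
  then obtain u where u: "N \<subseteq> {u}"
    using v unfolding degree_def N_def[symmetric] by (cases "N = {}") (auto simp: card_le_Suc0_iff_eq)
  have off_v: "c' x \<noteq> c' y" if "{x, y} \<in> edges G" "v \<notin> {x, y}" for x y
    using c' that unfolding delete_verts_def edges_def by auto
  have at_v: "x \<noteq> v \<and> x = u" if "{v, x} \<in> edges G" for x
    using that u wf_graph_edgeD[OF wf] unfolding N_def by auto
  define c where "c = c'(v := \<not> c' u)"
  have "c x \<noteq> c y" if e: "{x, y} \<in> edges G" for x y
  proof (cases "v \<in> {x, y}")
    case False
    with off_v[OF e] show ?thesis by (auto simp: c_def)
  next
    case True
    then consider "x = v" | "y = v" by blast
    then show ?thesis
    proof cases
      case 1
      then show ?thesis using at_v[of y] e by (auto simp: c_def)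
    next
      case 2
      then show ?thesis using at_v[of x] e by (auto simp: c_def insert_commute)
    qed
  qed
  then show ?thesis by blast
qed

lemma forest_2_colorable:
  assumes "wf_graph G" "forest G"
  shows "\<exists>c :: 'a \<Rightarrow> bool. \<forall>u v. {u, v} \<in> edges G \<longrightarrow> c u \<noteq> c v"
  using assms
proof (induction "card (verts G)" arbitrary: G rule: less_induct)
  case less
  show ?case
  proof (cases "verts G = {}")
    case True
    then have "edges G = {}" using less.prems(1) unfolding wf_graph_def by fastforce
    then show ?thesis by simp
  next
    case False
    then obtain v where v: "v \<in> verts G" "degree G v \<le> 1"
      using forest_has_leaf[OF less.prems] by blast
    define G' where "G' = delete_verts G {v}"
    have fin: "finite (verts G)" using less.prems(1) unfolding wf_graph_def by blast
    have "verts G' = verts G - {v}" unfolding G'_def delete_verts_def verts_def by simp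
    then have "card (verts G') < card (verts G)" using card_Diff1_less[OF fin v(1)] by simp
    moreover have "wf_graph G'" unfolding G'_def using less.prems(1) by (rule wf_graph_delete_verts)
    moreover have "forest G'" using less.prems(2)
      by (rule forest_mono) (auto simp: G'_def delete_verts_def verts_def edges_def)
    ultimately obtain c' :: "'a \<Rightarrow> bool" where "\<forall>x y. {x, y} \<in> edges G' \<longrightarrow> c' x \<noteq> c' y"
      using less.hyps by blast
    then show ?thesis using two_coloring_extend_leaf[OF less.prems(1) v(2)] unfolding G'_def by blast
  qed
qed

section \<open>3-colorings and homomorphisms\<close>

definition coloring3 :: "'a ugraph \<Rightarrow> ('a \<Rightarrow> nat) \<Rightarrow> bool" where
  "coloring3 G c \<longleftrightarrow> (\<forall>v\<in>verts G. c v < 3) \<and> (\<forall>u v. {u, v} \<in> edges G \<longrightarrow> c u \<noteq> c v)"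

lemma colorable3_iff_coloring3: "colorable3 G \<longleftrightarrow> (\<exists>c. coloring3 G c)"
  unfolding colorable3_def coloring3_def ..

lemma near_bipartite_colorable3:
  assumes "wf_graph G" "near_bipartite G"
  shows "colorable3 G"
proof -
  obtain I F where IF: "I \<union> F = verts G" "independent G I" "forest (induced G F)"
    using assms(2) unfolding near_bipartite_def by blast
  have "wf_graph (induced G F)" using assms(1) IF(1) by (intro wf_graph_induced) auto
  then obtain c2 :: "'a \<Rightarrow> bool" where c2: "\<forall>u v. {u, v} \<in> edges (induced G F) \<longrightarrow> c2 u \<noteq> c2 v"
    using forest_2_colorable IF(3) by blast
  define c where "c x = (if x \<in> I then 2 else if c2 x then 1 else 0 :: nat)" for x
  have "c u \<noteq> c v" if e: "{u, v} \<in> edges G" for u v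
  proof -
    have "u \<in> I \<union> F" "v \<in> I \<union> F" using wf_graph_edgeD[OF assms(1) e] IF(1) by auto
    moreover have "\<not> (u \<in> I \<and> v \<in> I)" using IF(2) e unfolding independent_def by auto
    ultimately show ?thesis using c2 e unfolding c_def induced_def edges_def by auto
  qed
  then have "coloring3 G c" unfolding coloring3_def c_def by auto
  then show ?thesis unfolding colorable3_iff_coloring3 by blast
qed

lemma coloring3_hom:
  assumes "coloring3 H c" "f ` verts G \<subseteq> verts H" "\<forall>e\<in>edges G. f ` e \<in> edges H"
  shows "coloring3 G (c \<circ> f)"
  unfolding coloring3_def
proof (intro conjI allI impI ballI)
  fix v assume "v \<in> verts G"
  then show "(c \<circ> f) v < 3" using assms unfolding coloring3_def by auto
next
  fix u v assume "{u, v} \<in> edges G"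
  then have "{f u, f v} \<in> edges H" using assms(3) by force
  then show "(c \<circ> f) u \<noteq> (c \<circ> f) v" using assms(1) unfolding coloring3_def by simp
qed

lemma colorable3_hom:
  assumes "colorable3 H" "f ` verts G \<subseteq> verts H" "\<forall>e\<in>edges G. f ` e \<in> edges H"
  shows "colorable3 G"
proof -
  obtain c where "coloring3 H c" using assms(1) unfolding colorable3_iff_coloring3 by blast
  then have "coloring3 G (c \<circ> f)" using assms(2,3) by (rule coloring3_hom)
  then show ?thesis unfolding colorable3_iff_coloring3 by blast
qed

lemma colorable3_subgraph:
  assumes "colorable3 G" "verts G' \<subseteq> verts G" "edges G' \<subseteq> edges G"
  shows "colorable3 G'"
  using colorable3_hom[of G id G'] assms by auto

definition delete_edge :: "'a ugraph \<Rightarrow> 'a set \<Rightarrow> 'a ugraph" where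
  "delete_edge G e = (verts G, edges G - {e})"

lemma verts_delete_edge [simp]: "verts (delete_edge G e) = verts G"
  and edges_delete_edge [simp]: "edges (delete_edge G e) = edges G - {e}"
  unfolding delete_edge_def verts_def edges_def by simp_all

definition four_edge_critical :: "'a ugraph \<Rightarrow> bool" where
  "four_edge_critical G \<longleftrightarrow> \<not> colorable3 G \<and> (\<forall>e\<in>edges G. colorable3 (delete_edge G e))"

text \<open>A proper subgraph misses an edge, since without isolated vertices it cannot miss a vertex only.\<close>
lemma four_criticalI:
  assumes crit: "four_edge_critical G" and no_isolated: "\<forall>v\<in>verts G. \<exists>e\<in>edges G. v \<in> e"
  shows "four_critical G"
  unfolding four_critical_def
proof (intro conjI allI impI)
  show "\<not> colorable3 G" using crit unfolding four_edge_critical_def by blast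
  fix G' assume "proper_subgraph G' G"
  then have sub: "wf_graph G'" "verts G' \<subseteq> verts G" "edges G' \<subseteq> edges G" "G' \<noteq> G"
    unfolding proper_subgraph_def subgraph_def by auto
  have "\<not> edges G \<subseteq> edges G'"
  proof
    assume "edges G \<subseteq> edges G'"
    then have edges_eq: "edges G' = edges G" using sub(3) by blast
    have "verts G \<subseteq> verts G'"
      using no_isolated sub(1) unfolding edges_eq[symmetric] wf_graph_def by blast
    then have "G' = G" using sub(2) edges_eq unfolding verts_def edges_def by (simp add: prod_eq_iff)
    then show False using sub(4) by blast
  qed
  then obtain e where e: "e \<in> edges G" "e \<notin> edges G'" by blast
  have "colorable3 (delete_edge G e)" using crit e(1) unfolding four_edge_critical_def by blast
  then show "colorable3 G'"
    by (rule colorable3_subgraph) (use sub e in auto)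
qed

lemma isomorphic_four_edge_critical:
  assumes "wf_graph G" "isomorphic G H" "four_edge_critical G"
  shows "four_edge_critical H"
proof -
  obtain f where f: "bij_betw f (verts G) (verts H)" "edges H = (\<lambda>e. f ` e) ` edges G"
    using assms(2) unfolding isomorphic_def by blast
  define g where "g = inv_into (verts G) f"
  have g_f: "g ` f ` e = e" if "e \<in> edges G" for e
    using that assms(1) f(1) unfolding g_def wf_graph_def bij_betw_def
    by (meson inv_into_image_cancel)
  have "\<not> colorable3 H"
    using assms(3) colorable3_hom[of H f G] f unfolding four_edge_critical_def bij_betw_def by blast
  moreover have "colorable3 (delete_edge H e')" if "e' \<in> edges H" for e'
  proof -
    obtain e where e: "e \<in> edges G" "e' = f ` e" using \<open>e' \<in> edges H\<close> f(2) by blast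
    have "colorable3 (delete_edge G e)" using assms(3) e(1) unfolding four_edge_critical_def by blast
    moreover have "g ` verts (delete_edge H e') \<subseteq> verts (delete_edge G e)"
      using f(1) unfolding g_def bij_betw_def by (auto intro: inv_into_into)
    moreover have "\<forall>e2'\<in>edges (delete_edge H e'). g ` e2' \<in> edges (delete_edge G e)"
    proof
      fix e2' assume e2': "e2' \<in> edges (delete_edge H e')"
      then obtain e2 where "e2 \<in> edges G" "e2' = f ` e2" using f(2) by auto
      then show "g ` e2' \<in> edges (delete_edge G e)" using e2' g_f e by auto
    qed
    ultimately show ?thesis by (rule colorable3_hom)
  qed
  ultimately show ?thesis unfolding four_edge_critical_def by blast
qed

section \<open>Odd induced cycles with linked outer neighbors\<close>

lemma odd_cycle_not_2_colorable:
  fixes h :: "nat \<Rightarrow> 'b"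
  assumes "odd k" and proper: "\<forall>i<k. h i \<noteq> h (Suc i mod k)"
    and colors: "\<forall>i<k. h i \<in> S" and "finite S" "card S \<le> 2"
  shows False
proof -
  have two: "x = z" if "x \<in> S" "y \<in> S" "z \<in> S" "x \<noteq> y" "y \<noteq> z" for x y z
  proof (rule ccontr)
    assume "x \<noteq> z"
    then have "card {x, y, z} \<le> card S" using that \<open>finite S\<close> by (intro card_mono) auto
    then show False using \<open>x \<noteq> z\<close> that(4,5) \<open>card S \<le> 2\<close> by auto
  qed
  have alternating: "h i = h 0 \<longleftrightarrow> even i" if "i < k" for i
    using that
  proof (induction i)
    case (Suc i)
    then have "h i \<noteq> h (Suc i)" using proper by (metis Suc_lessD mod_less)
    moreover have "h i \<in> S" "h (Suc i) \<in> S" "h 0 \<in> S" using colors Suc.prems by auto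
    ultimately have "h (Suc i) = h 0 \<longleftrightarrow> h i \<noteq> h 0" using two[of "h (Suc i)" "h i" "h 0"] by auto
    then show ?case using Suc by simp
  qed simp
  have "0 < k" using \<open>odd k\<close> by (rule odd_pos)
  then have "h (k - 1) = h 0" using alternating[of "k - 1"] \<open>odd k\<close> by simp
  moreover have "k - 1 < k" using \<open>0 < k\<close> by simp
  then have "h (k - 1) \<noteq> h (Suc (k - 1) mod k)" using proper by blast
  moreover have "Suc (k - 1) mod k = 0" using \<open>0 < k\<close> by simp
  ultimately show False by simp
qed

lemma Suc_mod_pred:
  fixes i k :: nat
  assumes "i < k" shows "i = ((i + 1) mod k + k - 1) mod k"
proof (cases "i + 1 < k")
  case True
  then have "(i + 1) mod k = i + 1" by (rule mod_less)
  then show ?thesis using assms by simp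
next
  case False
  then have "i + 1 = k" using assms by simp
  then show ?thesis by (metis add_diff_cancel_right' mod_less mod_self add.left_neutral assms)
qed

lemma induced_cycle_inner_neighbor:
  assumes cyc: "induced_cycle G xs" and j: "j < length xs"
    and e: "{xs ! j, u} \<in> edges G" and u: "u \<in> set xs"
  shows "u = xs ! ((j + 1) mod length xs) \<or> u = xs ! ((j + length xs - 1) mod length xs)"
proof -
  let ?k = "length xs"
  have "distinct xs" using cyc unfolding induced_cycle_def is_cycle_def by blast
  have "{xs ! j, u} \<subseteq> set xs" using j u by simp
  then obtain i where i: "i < ?k" "{xs ! j, u} = {xs ! i, xs ! ((i + 1) mod ?k)}"
    using cyc e unfolding induced_cycle_def by blast
  have "0 < ?k" using j by linarith
  then have next_lt: "(i + 1) mod ?k < ?k" by simp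
  from i(2) consider "xs ! j = xs ! i" "u = xs ! ((i + 1) mod ?k)"
    | "xs ! j = xs ! ((i + 1) mod ?k)" "u = xs ! i"
    unfolding doubleton_eq_iff by blast
  then show ?thesis
  proof cases
    case 1
    then have "j = i" using nth_eq_iff_index_eq[OF \<open>distinct xs\<close> j i(1)] by blast
    then show ?thesis using 1 by simp
  next
    case 2
    then have "j = (i + 1) mod ?k" using nth_eq_iff_index_eq[OF \<open>distinct xs\<close> j next_lt] by blast
    then show ?thesis using 2 Suc_mod_pred[OF i(1)] by simp
  qed
qed

lemma induced_cycle_outer_neighbor:
  assumes cyc: "induced_cycle G xs" and j: "j < length xs" and deg: "2 < degree G (xs ! j)"
  shows "\<exists>z. {xs ! j, z} \<in> edges G \<and> z \<notin> set xs"
proof (rule ccontr)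
  let ?k = "length xs"
  define N where "N = {u. {xs ! j, u} \<in> edges G}"
  assume "\<not> ?thesis"
  then have "N \<subseteq> {xs ! ((j + 1) mod ?k), xs ! ((j + ?k - 1) mod ?k)}"
    using induced_cycle_inner_neighbor[OF cyc j] unfolding N_def by blast
  then have "card N \<le> card {xs ! ((j + 1) mod ?k), xs ! ((j + ?k - 1) mod ?k)}" by (rule card_mono[rotated]) simp
  also have "\<dots> \<le> 2" by (simp add: card_insert_if)
  finally have "card N \<le> 2" .
  then show False using deg unfolding degree_def N_def by simp
qed

text \<open>A relaxation of the paper's specially-linked relation: the witness H only has to be
  non-3-colorable, and f need not be injective.\<close>
definition color_linked :: "'a ugraph \<Rightarrow> 'a \<Rightarrow> 'a \<Rightarrow> bool" where
  "color_linked G a b \<longleftrightarrow> (\<exists>(H :: nat ugraph) v w f. \<not> colorable3 H \<and> {v, w} \<in> edges H \<and>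
     f ` verts H \<subseteq> verts G \<and> (\<forall>e\<in>edges H - {{v, w}}. f ` e \<in> edges G) \<and> f v = a \<and> f w = b)"

lemma color_linked_mono:
  assumes "color_linked G' a b" "verts G' \<subseteq> verts G" "edges G' \<subseteq> edges G"
  shows "color_linked G a b"
proof -
  obtain H :: "nat ugraph" and v w f where "\<not> colorable3 H" "{v, w} \<in> edges H"
    "f ` verts H \<subseteq> verts G'" "\<forall>e\<in>edges H - {{v, w}}. f ` e \<in> edges G'" "f v = a" "f w = b"
    using assms(1) unfolding color_linked_def by blast
  then show ?thesis using assms(2,3) unfolding color_linked_def by blast
qed

lemma color_linked_same_color:
  assumes "color_linked G a b" "coloring3 G c"
  shows "c a = c b"
proof (rule ccontr)
  assume ne: "c a \<noteq> c b"
  obtain H :: "nat ugraph" and v w f where H: "\<not> colorable3 H" "{v, w} \<in> edges H"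
    and f: "f ` verts H \<subseteq> verts G" "\<forall>e\<in>edges H - {{v, w}}. f ` e \<in> edges G" "f v = a" "f w = b"
    using assms(1) unfolding color_linked_def by blast
  have "(c \<circ> f) x \<noteq> (c \<circ> f) y" if xy: "{x, y} \<in> edges H" for x y
  proof (cases "{x, y} = {v, w}")
    case True
    then show ?thesis using ne f(3,4) by (auto simp: doubleton_eq_iff)
  next
    case False
    then have "{f x, f y} \<in> edges G" using f(2) xy by force
    then show ?thesis using assms(2) unfolding coloring3_def by simp
  qed
  moreover have "\<forall>x\<in>verts H. (c \<circ> f) x < 3" using f(1) assms(2) unfolding coloring3_def by auto
  ultimately have "coloring3 H (c \<circ> f)" unfolding coloring3_def by blast
  then show False using H(1) unfolding colorable3_iff_coloring3 by blast
qed

lemma outer_neighbors_same_color: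
  assumes c: "coloring3 G c" and j: "j < length xs"
    and z: "\<And>j. j < length xs \<Longrightarrow> {xs ! j, z j} \<in> edges G \<and> z j \<notin> set xs"
    and linked: "\<And>j a b. j < length xs \<Longrightarrow> {xs ! j, a} \<in> edges G \<Longrightarrow> a \<notin> set xs \<Longrightarrow>
      {xs ! ((j + 1) mod length xs), b} \<in> edges G \<Longrightarrow> b \<notin> set xs \<Longrightarrow> a \<noteq> b \<Longrightarrow> color_linked G a b"
  shows "c (z j) = c (z 0)"
proof -
  let ?k = "length xs"
  have step: "c (z i) = c (z ((i + 1) mod ?k))" if i: "i < ?k" for i
  proof (cases "z i = z ((i + 1) mod ?k)")
    case False
    have "(i + 1) mod ?k < ?k" using i by (intro mod_less_divisor) linarith
    then have "color_linked G (z i) (z ((i + 1) mod ?k))" using linked[OF i] z i False by blast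
    then show ?thesis using c by (rule color_linked_same_color)
  qed simp
  show ?thesis
    using j
  proof (induction j)
    case (Suc j)
    then show ?case using step[of j] by simp
  qed simp
qed

lemma odd_induced_cycle_not_colorable3:
  assumes wf: "wf_graph G" and cyc: "induced_cycle G xs" and odd: "odd (length xs)"
    and deg: "\<forall>x\<in>set xs. 2 < degree G x"
    and linked: "\<And>j a b. j < length xs \<Longrightarrow> {xs ! j, a} \<in> edges G \<Longrightarrow> a \<notin> set xs \<Longrightarrow>
      {xs ! ((j + 1) mod length xs), b} \<in> edges G \<Longrightarrow> b \<notin> set xs \<Longrightarrow> a \<noteq> b \<Longrightarrow> color_linked G a b"
  shows "\<not> colorable3 G"
proof
  let ?k = "length xs"
  assume "colorable3 G"
  then obtain c where c: "coloring3 G c" unfolding colorable3_iff_coloring3 by blast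
  have "\<forall>j<?k. \<exists>z. {xs ! j, z} \<in> edges G \<and> z \<notin> set xs"
    using induced_cycle_outer_neighbor[OF cyc] deg by simp
  then obtain z where z: "\<And>j. j < ?k \<Longrightarrow> {xs ! j, z j} \<in> edges G \<and> z j \<notin> set xs"
    unfolding choice_iff' by blast
  have "0 < ?k" using odd by (rule odd_pos)
  define g where "g = c (z 0)"
  have "z 0 \<in> verts G" using z[OF \<open>0 < ?k\<close>] wf_graph_edgeD[OF wf] by blast
  then have "g < 3" using c unfolding g_def coloring3_def by blast
  have cycle_edge: "{xs ! i, xs ! ((i + 1) mod ?k)} \<in> edges G" if "i < ?k" for i
    using cyc that unfolding induced_cycle_def is_cycle_def by blast
  show False
  proof (rule odd_cycle_not_2_colorable[of ?k "\<lambda>i. c (xs ! i)" "{..<3} - {g}"])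
    show "\<forall>i<?k. c (xs ! i) \<noteq> c (xs ! (Suc i mod ?k))"
      using cycle_edge c unfolding coloring3_def by simp
    show "\<forall>i<?k. c (xs ! i) \<in> {..<3} - {g}"
    proof (intro allI impI)
      fix i assume i: "i < ?k"
      have "xs ! i \<in> verts G" using cyc i unfolding induced_cycle_def is_cycle_def by auto
      moreover have "c (xs ! i) \<noteq> c (z i)" using z[OF i] c unfolding coloring3_def by blast
      moreover have "c (z i) = g" unfolding g_def using c i z linked by (rule outer_neighbors_same_color)
      ultimately show "c (xs ! i) \<in> {..<3} - {g}" using c unfolding coloring3_def by auto
    qed
    show "card ({..<3} - {g}) \<le> 2" using \<open>g < 3\<close> by simp
  qed (use odd in auto)
qed

section \<open>The base graphs\<close>

lemma verts_mk_graph [simp]: "verts (mk_graph n es) = {0..<n}"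
  and edges_mk_graph [simp]: "edges (mk_graph n es) = (\<lambda>(a, b). {a, b}) ` set es"
  unfolding mk_graph_def verts_def edges_def by simp_all

lemma wf_graph_mk_graph:
  "list_all (\<lambda>(a, b). a \<noteq> b \<and> a < n \<and> b < n) es \<Longrightarrow> wf_graph (mk_graph n es)"
  unfolding wf_graph_def mk_graph_def verts_def edges_def by (auto simp: list_all_iff)

lemma mk_graph_no_isolated:
  "list_all (\<lambda>v. list_ex (\<lambda>(a, b). v = a \<or> v = b) es) [0..<n] \<Longrightarrow>
   \<forall>v\<in>verts (mk_graph n es). \<exists>e\<in>edges (mk_graph n es). v \<in> e"
  unfolding mk_graph_def verts_def edges_def by (fastforce simp: list_all_iff list_ex_iff)

lemma third_color:
  fixes a b x y :: nat
  assumes "a < 3" "b < 3" "x < 3" "y < 3" "a \<noteq> b" "x \<noteq> a" "x \<noteq> b" "y \<noteq> a" "y \<noteq> b"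
  shows "x = y"
  using assms by linarith

text \<open>Each edge constraint is stated in both orientations, so that the simplifier can use it either way.\<close>
lemma not_colorable3_mk_graphI:
  assumes "\<And>c :: nat \<Rightarrow> nat. (\<And>v. v < n \<Longrightarrow> c v < 3) \<Longrightarrow>
    list_all (\<lambda>(a, b). c a \<noteq> c b \<and> c b \<noteq> c a) es \<Longrightarrow> False"
  shows "\<not> colorable3 (mk_graph n es)"
proof
  assume "colorable3 (mk_graph n es)"
  then obtain c where c: "coloring3 (mk_graph n es) c" unfolding colorable3_iff_coloring3 by blast
  have "c a \<noteq> c b \<and> c b \<noteq> c a" if "(a, b) \<in> set es" for a b
    using c that unfolding coloring3_def mk_graph_def edges_def by force
  then have "list_all (\<lambda>(a, b). c a \<noteq> c b \<and> c b \<noteq> c a) es" unfolding list_all_iff by auto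
  moreover have "c v < 3" if "v < n" for v using c that unfolding coloring3_def mk_graph_def verts_def by simp
  ultimately show False using assms by blast
qed

lemma K4_not_colorable3: "\<not> colorable3 K4"
  unfolding K4_def
proof (rule not_colorable3_mk_graphI, goal_cases)
  case (1 c)
  note bound = 1(1) and E = 1(2)[unfolded list.pred_inject prod.case, simplified]
  have "c 2 = c 3" by (rule third_color[of "c 0" "c 1"]; simp add: bound E)
  then show False using E by simp
qed

lemma W5_not_colorable3: "\<not> colorable3 W5"
  unfolding W5_def
proof (rule not_colorable3_mk_graphI, goal_cases)
  case (1 c)
  note bound = 1(1) and E = 1(2)[unfolded list.pred_inject prod.case, simplified]
  have "c 0 = c 2" "c 2 = c 4"
    by (rule third_color[of "c 5" "c 1"] third_color[of "c 5" "c 3"];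
        simp add: bound E)+
  then show False using E by simp
qed

lemma J7_not_colorable3: "\<not> colorable3 J7"
  unfolding J7_def
proof (rule not_colorable3_mk_graphI, goal_cases)
  case (1 c)
  note bound = 1(1) and E = 1(2)[unfolded list.pred_inject prod.case, simplified]
  have eqs: "c 0 = c 5" "c 1 = c 6" "c 2 = c 4"
    by (rule third_color[of "c 4" "c 6"] third_color[of "c 4" "c 5"] third_color[of "c 5" "c 6"];
        simp add: bound E)+
  have "c 3 = c 6"
    using eqs E by (intro third_color[of "c 4" "c 5"]) (simp_all add: bound)
  then show False using eqs E by simp
qed

lemma J12_not_colorable3: "\<not> colorable3 J12"
  unfolding J12_def
proof (rule not_colorable3_mk_graphI, goal_cases)
  case (1 c)
  note bound = 1(1) and E = 1(2)[unfolded list.pred_inject prod.case, simplified]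
  have eqs: "c 6 = c 0" "c 7 = c 0" "c 8 = c 1" "c 9 = c 1"
    by (rule third_color[of "c 2" "c 3"] third_color[of "c 4" "c 5"];
        simp add: bound E)+
  have "c 10 = c 11"
    using eqs E by (intro third_color[of "c 0" "c 1"]) (simp_all add: bound)
  then show False using E by simp
qed

text \<open>The i-th list of the certificate is a 3-coloring of the graph minus its i-th edge.\<close>
lemma four_edge_critical_mk_graphI:
  fixes ds :: "nat list list"
  assumes "\<not> colorable3 (mk_graph n es)"
    and cert: "list_all2 (\<lambda>d (a, b). length d = n \<and> list_all (\<lambda>x. x < 3) d \<and>
      list_all (\<lambda>(x, y). {x, y} = {a, b} \<or> d ! x \<noteq> d ! y) es) ds es"
  shows "four_edge_critical (mk_graph n es)"
  unfolding four_edge_critical_def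
proof (intro conjI ballI)
  show "\<not> colorable3 (mk_graph n es)" by fact
  fix e assume "e \<in> edges (mk_graph n es)"
  then obtain i where i: "i < length es" "e = (\<lambda>(a, b). {a, b}) (es ! i)"
    by (auto simp: in_set_conv_nth)
  obtain a b where ab: "es ! i = (a, b)" by fastforce
  define d where "d = ds ! i"
  have d: "length d = n" "\<forall>x\<in>set d. x < 3" "\<forall>(x, y)\<in>set es. {x, y} = {a, b} \<or> d ! x \<noteq> d ! y"
    using list_all2_nthD2[OF cert i(1)] unfolding ab d_def list_all_iff by simp_all
  have "coloring3 (delete_edge (mk_graph n es) e) (\<lambda>v. d ! v)"
    unfolding coloring3_def
  proof (intro conjI allI impI ballI)
    fix v assume "v \<in> verts (delete_edge (mk_graph n es) e)"
    then show "d ! v < 3" using d(1,2) nth_mem[of v d] by simp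
  next
    fix u v assume "{u, v} \<in> edges (delete_edge (mk_graph n es) e)"
    then obtain x y where "(x, y) \<in> set es" "{u, v} = {x, y}" "{x, y} \<noteq> {a, b}"
      using i(2) ab by auto
    then show "d ! u \<noteq> d ! v" using d(3) by (auto simp: doubleton_eq_iff)
  qed
  then show "colorable3 (delete_edge (mk_graph n es) e)" unfolding colorable3_iff_coloring3 by blast
qed

lemma K4_four_edge_critical: "four_edge_critical K4"
  using K4_not_colorable3 unfolding K4_def
  by (rule four_edge_critical_mk_graphI[where ds =
    "[[0, 0, 1, 2], [0, 1, 0, 2], [0, 1, 2, 0], [0, 1, 1, 2], [0, 1, 2, 1], [0, 1, 2, 2]]"]) code_simp

lemma W5_four_edge_critical: "four_edge_critical W5"
  using W5_not_colorable3 unfolding W5_def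
  by (rule four_edge_critical_mk_graphI[where ds =
    "[[0, 0, 1, 0, 1, 2], [0, 1, 1, 0, 1, 2], [0, 1, 0, 0, 1, 2], [0, 1, 0, 1, 1, 2], [0, 1, 0, 1, 0, 2], [0, 1, 2, 1, 2, 0], [0, 1, 2, 0, 2, 1], [0, 1, 2, 0, 1, 2], [0, 1, 0, 2, 1, 2], [0, 1, 0, 1, 2, 2]]"]) code_simp

lemma J7_four_edge_critical: "four_edge_critical J7"
  using J7_not_colorable3 unfolding J7_def
  by (rule four_edge_critical_mk_graphI[where ds =
    "[[0, 1, 0, 2, 0, 2, 1], [0, 0, 1, 2, 1, 2, 0], [0, 1, 2, 0, 2, 0, 1], [0, 1, 1, 2, 1, 0, 2], [0, 0, 1, 2, 1, 0, 2], [0, 1, 2, 1, 2, 0, 1], [0, 1, 0, 2, 2, 0, 1], [0, 1, 1, 2, 2, 0, 1], [0, 1, 2, 2, 2, 0, 1], [0, 0, 0, 1, 1, 1, 2], [0, 0, 0, 1, 1, 2, 1], [0, 0, 0, 1, 1, 2, 2]]"]) code_simp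

lemma J12_four_edge_critical: "four_edge_critical J12"
  using J12_not_colorable3 unfolding J12_def
  by (rule four_edge_critical_mk_graphI[where ds =
    "[[0, 0, 1, 2, 1, 2, 0, 0, 0, 0, 1, 2], [0, 1, 1, 1, 0, 2, 0, 2, 1, 1, 2, 0], [0, 1, 1, 2, 0, 0, 0, 0, 1, 2, 2, 1], [0, 1, 0, 2, 0, 2, 1, 1, 1, 1, 0, 2], [0, 1, 2, 0, 0, 2, 1, 1, 1, 1, 0, 2], [0, 1, 1, 2, 1, 2, 0, 0, 0, 0, 1, 2], [0, 1, 1, 2, 2, 1, 0, 0, 0, 0, 1, 2], [0, 1, 1, 2, 0, 2, 1, 0, 1, 1, 0, 2], [0, 1, 1, 2, 0, 2, 2, 0, 1, 1, 0, 2], [0, 1, 1, 2, 0, 2, 0, 1, 1, 1, 2, 0], [0, 1, 1, 2, 0, 2, 0, 2, 1, 1, 2, 0], [0, 1, 1, 2, 0, 2, 0, 0, 0, 1, 1, 2], [0, 1, 1, 2, 0, 2, 0, 0, 2, 1, 1, 2], [0, 1, 1, 2, 0, 2, 0, 0, 1, 0, 2, 1], [0, 1, 1, 2, 0, 2, 0, 0, 1, 2, 2, 1], [0, 1, 1, 2, 0, 2, 0, 0, 1, 1, 0, 2], [0, 1, 1, 2, 0, 2, 0, 0, 1, 1, 1, 2], [0, 1, 1, 2, 0, 2, 0, 0, 1, 1, 2, 0], [0, 1, 1, 2, 0, 2, 0, 0, 1, 1, 2, 1], [0, 1, 1, 2, 0, 2, 0, 0, 1, 1, 2, 2]]"]) 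code_simp

lemma base_graphs_wf: "wf_graph K4" "wf_graph W5" "wf_graph J7" "wf_graph J12"
  unfolding K4_def W5_def J7_def J12_def by (rule wf_graph_mk_graph, code_simp)+

lemma base_graphs_no_isolated:
  "\<forall>v\<in>verts K4. \<exists>e\<in>edges K4. v \<in> e" "\<forall>v\<in>verts W5. \<exists>e\<in>edges W5. v \<in> e"
  "\<forall>v\<in>verts J7. \<exists>e\<in>edges J7. v \<in> e" "\<forall>v\<in>verts J12. \<exists>e\<in>edges J12. v \<in> e"
  unfolding K4_def W5_def J7_def J12_def by (rule mk_graph_no_isolated, code_simp)+

lemma four_critical_if_isomorphic:
  assumes "wf_graph G" "four_edge_critical G" and no_isolated: "\<forall>v\<in>verts G. \<exists>e\<in>edges G. v \<in> e"
    and iso: "isomorphic G H"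
  shows "four_critical H"
proof (rule four_criticalI)
  show "four_edge_critical H" using assms(1) iso assms(2) by (rule isomorphic_four_edge_critical)
  obtain f where f: "bij_betw f (verts G) (verts H)" "edges H = (\<lambda>e. f ` e) ` edges G"
    using iso unfolding isomorphic_def by blast
  show "\<forall>v\<in>verts H. \<exists>e\<in>edges H. v \<in> e"
  proof
    fix v assume "v \<in> verts H"
    then obtain u where u: "u \<in> verts G" "v = f u" using f(1) by (auto simp: bij_betw_def)
    then obtain e where "e \<in> edges G" "u \<in> e" using no_isolated by blast
    then show "\<exists>e\<in>edges H. v \<in> e" using f(2) u(2) by blast
  qed
qed

lemma base_graph_four_critical: "base_graph H \<Longrightarrow> four_critical H"
  unfolding base_graph_def
  using four_critical_if_isomorphic[OF base_graphs_wf(1) K4_four_edge_critical base_graphs_no_isolated(1)]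
    four_critical_if_isomorphic[OF base_graphs_wf(2) W5_four_edge_critical base_graphs_no_isolated(2)]
    four_critical_if_isomorphic[OF base_graphs_wf(3) J7_four_edge_critical base_graphs_no_isolated(3)]
    four_critical_if_isomorphic[OF base_graphs_wf(4) J12_four_edge_critical base_graphs_no_isolated(4)]
  by blast

theorem lemma3p6:
  assumes "H \<in> Hprime"
  shows "four_critical H"
  using assms
proof (induction rule: Hprime.induct)
  case (base H)
  then show ?case by (simp add: base_graph_four_critical)
next
  case (step H xs)
  have wf: "wf_graph H" using step.hyps(1) unfolding nb_critical_def by blast
  have "\<not> colorable3 H"
  proof (rule odd_induced_cycle_not_colorable3[OF wf step.hyps(2)])
    show "odd (length xs)" using step.hyps(3) by auto
    show "\<forall>x\<in>set xs. 2 < degree H x" using step.hyps(4) by simp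
    fix j a b
    assume "j < length xs" "{xs ! j, a} \<in> edges H" "a \<notin> set xs"
      "{xs ! ((j + 1) mod length xs), b} \<in> edges H" "b \<notin> set xs" "a \<noteq> b"
    then have "color_linked (delete_verts H (set xs)) a b"
      using step.IH unfolding color_linked_def four_critical_def by blast
    then show "color_linked H a b"
      by (rule color_linked_mono) (auto simp: delete_verts_def verts_def edges_def)
  qed
  moreover have "\<forall>G'. proper_subgraph G' H \<longrightarrow> colorable3 G'"
    using step.hyps(1) near_bipartite_colorable3
    unfolding nb_critical_def proper_subgraph_def subgraph_def by blast
  ultimately show ?case unfolding four_critical_def by blast
qed

end
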